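(* Let $(m_n)$ be a sequence of positive integers and $V_n\subseteq GF(2)^{m_n}$ linear subspaces. If $|\mathcal{A}_1(V_n)|\to\infty$ as $n\to\infty$, then the sequence $(V_n)$ has a uniform weight spectrum.
   Context: The weight ${\rm wt}(x)$ of $x\in GF(2)^m$ is the number of nonzero coordinates; for $W\subseteq GF(2)^m$, $\mathcal{A}_i(W)=\{x\in W:{\rm wt}(x)=i\}$. For a linear subspace $V\subseteq GF(2)^m$ let $\alpha(V)=\max_{i,\,x}\frac{|\mathcal{A}_i(V+x)|}{|V|}$, the maximum over all $i$ and all $x\in GF(2)^m$. A sequence of subspaces $V_n\subseteq GF(2)^{m_n}$ has a uniform weight spectrum if $\alpha(V_n)\to0$ as $n\to\infty$. *)

theory Defs
  imports Complex_Main "HOL-Library.Z2"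
begin

text \<open>GF(2)^m is modelled as the functions nat => bit (bit = the field GF(2) from HOL-Library.Z2)
  that vanish outside the coordinates 0..m-1.\<close>

definition gf2_space :: "nat \<Rightarrow> (nat \<Rightarrow> bit) set" where
  "gf2_space m = {x. \<forall>i\<ge>m. x i = 0}"

definition vadd :: "(nat \<Rightarrow> bit) \<Rightarrow> (nat \<Rightarrow> bit) \<Rightarrow> (nat \<Rightarrow> bit)" where
  "vadd x y = (\<lambda>i. x i + y i)"

definition vscale :: "bit \<Rightarrow> (nat \<Rightarrow> bit) \<Rightarrow> (nat \<Rightarrow> bit)" where
  "vscale c x = (\<lambda>i. c * x i)"

definition is_subspace :: "nat \<Rightarrow> (nat \<Rightarrow> bit) set \<Rightarrow> bool" where
  "is_subspace m V \<longleftrightarrow> V \<subseteq> gf2_space m \<and> (\<lambda>_. 0) \<in> V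
     \<and> (\<forall>x\<in>V. \<forall>y\<in>V. vadd x y \<in> V) \<and> (\<forall>c. \<forall>x\<in>V. vscale c x \<in> V)"

definition wt :: "(nat \<Rightarrow> bit) \<Rightarrow> nat" where
  "wt x = card {i. x i \<noteq> 0}"

definition weight_class :: "nat \<Rightarrow> (nat \<Rightarrow> bit) set \<Rightarrow> (nat \<Rightarrow> bit) set" where
  "weight_class i W = {x\<in>W. wt x = i}"

definition coset :: "(nat \<Rightarrow> bit) set \<Rightarrow> (nat \<Rightarrow> bit) \<Rightarrow> (nat \<Rightarrow> bit) set" where
  "coset V x = (\<lambda>v. vadd v x) ` V"

text \<open>alpha(V) = max over all i and all x in GF(2)^m of |A_i(V+x)| / |V|.\<close>
definition alpha :: "nat \<Rightarrow> (nat \<Rightarrow> bit) set \<Rightarrow> real" where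
  "alpha m V = Sup {real (card (weight_class i (coset V x))) / real (card V) | i x. x \<in> gf2_space m}"

end

(*
  Suppose V contains the unit vectors e_j for j in a set S of size s. Then translation by
  any sum of them permutes every coset C = V + x. Double counting the pairs (T, c) with
  T \<subseteq> S, c \<in> C and wt (c + \<Sum>j\<in>T. e_j) = k gives 2^s |A_k(C)| \<le> |C| (s choose s div 2),
  because the 2^s points c + \<Sum>j\<in>T. e_j contain at most (s choose s div 2) vectors of a
  fixed weight. With s = 2j this bounds alpha(V) by (2j choose j) / 4^j, which is at most
  1 / sqrt (2j + 1) and so tends to 0 as |A_1(V)| \<ge> 2j grows.
*)
theory Submission
  imports Defs
begin

(* Reason about bit as the field GF(2) rather than through Boolean xor/and. *)
declare add_bit_eq_xor [simp del] mult_bit_eq_and [simp del]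

lemma bit_add_self [simp]: "(b::bit) + b = 0"
  by (cases b) simp_all

lemma vadd_vadd_cancel [simp]: "vadd (vadd c v) v = c"
  unfolding vadd_def by (simp add: add.assoc)

definition char_vec :: "nat set \<Rightarrow> nat \<Rightarrow> bit" where
  "char_vec T i = of_bool (i \<in> T)"

lemma char_vec_support: "char_vec {i. x i \<noteq> 0} = x"
proof
  fix i show "char_vec {i. x i \<noteq> 0} i = x i"
    unfolding char_vec_def by (cases "x i") simp_all
qed

lemma support_subset_gf2_space: "x \<in> gf2_space m \<Longrightarrow> {i. x i \<noteq> 0} \<subseteq> {..<m}"
  unfolding gf2_space_def using not_less by blast

lemma finite_support_gf2_space: "x \<in> gf2_space m \<Longrightarrow> finite {i. x i \<noteq> 0}"
  using support_subset_gf2_space finite_subset by blast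

lemma finite_gf2_space: "finite (gf2_space m)"
proof -
  have "gf2_space m \<subseteq> char_vec ` Pow {..<m}"
  proof
    fix x assume "x \<in> gf2_space m"
    then have "{i. x i \<noteq> 0} \<in> Pow {..<m}"
      using support_subset_gf2_space by blast
    then show "x \<in> char_vec ` Pow {..<m}"
      using char_vec_support[of x] by (metis image_eqI)
  qed
  then show ?thesis
    by (rule finite_subset) simp
qed

lemma wt_eq_1_iff: "wt x = 1 \<longleftrightarrow> (\<exists>j. x = char_vec {j})"
proof -
  have "wt x = 1 \<longleftrightarrow> (\<exists>j. {i. x i \<noteq> 0} = {j})"
    unfolding wt_def One_nat_def by (rule card_1_singleton_iff)
  also have "\<dots> \<longleftrightarrow> (\<exists>j. x = char_vec {j})"
  proof -
    have "(x i \<noteq> 0 \<longleftrightarrow> i = j) \<longleftrightarrow> x i = of_bool (i = j)" for i j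
      by (cases "x i") auto
    then show ?thesis
      unfolding char_vec_def set_eq_iff fun_eq_iff by simp
  qed
  finally show ?thesis .
qed

lemma inj_char_vec_singleton: "inj (\<lambda>j. char_vec {j})"
proof (rule injI)
  fix a b assume "char_vec {a} = char_vec {b}"
  then have "char_vec {a} a = char_vec {b} a" by simp
  then show "a = b" by (simp add: char_vec_def)
qed

lemma card_weight_class_1: "card (weight_class 1 V) = card {j. char_vec {j} \<in> V}"
proof -
  have "weight_class 1 V = (\<lambda>j. char_vec {j}) ` {j. char_vec {j} \<in> V}"
    unfolding weight_class_def wt_eq_1_iff by blast
  then show ?thesis
    using inj_on_subset[OF inj_char_vec_singleton subset_UNIV] by (simp add: card_image)
qed

lemma char_vec_in_subspace:
  assumes "is_subspace m V" "finite T" "\<And>t. t \<in> T \<Longrightarrow> char_vec {t} \<in> V"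
  shows "char_vec T \<in> V"
  using assms(2,3)
proof (induction T rule: finite_induct)
  case empty
  then show ?case
    using assms(1) by (simp add: is_subspace_def char_vec_def fun_eq_iff)
next
  case (insert t T)
  then have "char_vec (insert t T) = vadd (char_vec T) (char_vec {t})"
    by (auto simp: char_vec_def vadd_def)
  then show ?case
    using insert assms(1) unfolding is_subspace_def by simp
qed

lemma vadd_in_coset:
  assumes "is_subspace m V" "c \<in> coset V x" "v \<in> V"
  shows "vadd c v \<in> coset V x"
proof -
  obtain u where u: "u \<in> V" and c: "c = vadd u x"
    using assms(2) unfolding coset_def by blast
  have "vadd u v \<in> V"
    using assms(1) u assms(3) unfolding is_subspace_def by blast
  moreover have "vadd c v = vadd (vadd u v) x"
    unfolding c vadd_def by (simp add: ac_simps)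
  ultimately show ?thesis
    unfolding coset_def by blast
qed

lemma finite_subspace: "is_subspace m V \<Longrightarrow> finite V"
  using finite_gf2_space finite_subset unfolding is_subspace_def by blast

lemma card_coset: "card (coset V x) = card V"
  unfolding coset_def by (rule card_image, rule inj_on_inverseI[where g = "\<lambda>c. vadd c x"]) simp

lemma coset_subset_gf2_space:
  assumes "is_subspace m V" "x \<in> gf2_space m"
  shows "coset V x \<subseteq> gf2_space m"
proof
  fix c assume "c \<in> coset V x"
  then obtain u where u: "u \<in> gf2_space m" and c: "c = vadd u x"
    using assms(1) unfolding coset_def is_subspace_def by blast
  have "u i = 0 \<and> x i = 0" if "i \<ge> m" for i
    using u assms(2) that unfolding gf2_space_def by blast
  then show "c \<in> gf2_space m"
    unfolding c gf2_space_def vadd_def by simp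
qed

lemma support_vadd_char_vec:
  "{i. vadd c (char_vec T) i \<noteq> 0} = sym_diff {i. c i \<noteq> 0} T"
proof -
  have "vadd c (char_vec T) i \<noteq> 0 \<longleftrightarrow> (c i \<noteq> 0) \<noteq> (i \<in> T)" for i
    unfolding vadd_def char_vec_def by (cases "c i") auto
  then show ?thesis by blast
qed

lemma card_cube_points_of_weight_le:
  assumes "finite {i. c i \<noteq> 0}" "finite S"
  shows "card {T \<in> Pow S. wt (vadd c (char_vec T)) = k} \<le> card S choose (card S div 2)"
proof -
  define N where "N = {i. c i \<noteq> 0}"
  define delta where "delta = sym_diff (N \<inter> S)"
  have "wt (vadd c (char_vec T)) = card (N - S) + card (delta T)" if "T \<subseteq> S" for T
  proof -
    have "{i. vadd c (char_vec T) i \<noteq> 0} = (N - S) \<union> delta T"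
      unfolding support_vadd_char_vec N_def[symmetric] delta_def using that by blast
    moreover have "finite (delta T)"
      using assms(2) that finite_subset unfolding delta_def by blast
    moreover have "finite (N - S)" "(N - S) \<inter> delta T = {}"
      using assms(1) that unfolding N_def delta_def by auto
    ultimately show ?thesis
      unfolding wt_def by (simp add: card_Un_disjoint)
  qed
  then have image_subset: "delta ` {T \<in> Pow S. wt (vadd c (char_vec T)) = k}
      \<subseteq> {U. U \<subseteq> S \<and> card U = k - card (N - S)}"
    unfolding delta_def by auto
  have "inj delta"
    by (rule inj_on_inverseI[where g = delta]) (auto simp: delta_def)
  then have "card {T \<in> Pow S. wt (vadd c (char_vec T)) = k}
      = card (delta ` {T \<in> Pow S. wt (vadd c (char_vec T)) = k})"
    by (simp add: card_image inj_on_subset)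
  also have "\<dots> \<le> card S choose (k - card (N - S))"
    using card_mono[OF _ image_subset] n_subsets[OF assms(2)] assms(2) by simp
  also have "\<dots> \<le> card S choose (card S div 2)"
    by (rule binomial_maximum)
  finally show ?thesis .
qed

lemma card_weight_class_coset_translate:
  assumes "is_subspace m V" "v \<in> V"
  shows "card {c \<in> coset V x. wt (vadd c v) = k} = card (weight_class k (coset V x))"
proof -
  have image: "(\<lambda>c. vadd c v) ` {c \<in> coset V x. wt (vadd c v) = k} = weight_class k (coset V x)"
  proof
    show "(\<lambda>c. vadd c v) ` {c \<in> coset V x. wt (vadd c v) = k} \<subseteq> weight_class k (coset V x)"
    proof
      fix d assume "d \<in> (\<lambda>c. vadd c v) ` {c \<in> coset V x. wt (vadd c v) = k}"
      then obtain c where "c \<in> coset V x" "wt (vadd c v) = k" "d = vadd c v"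
        by blast
      then show "d \<in> weight_class k (coset V x)"
        using vadd_in_coset[OF assms(1) _ assms(2)] unfolding weight_class_def by blast
    qed
    show "weight_class k (coset V x) \<subseteq> (\<lambda>c. vadd c v) ` {c \<in> coset V x. wt (vadd c v) = k}"
    proof
      fix d assume "d \<in> weight_class k (coset V x)"
      then have "d \<in> coset V x" "wt d = k"
        unfolding weight_class_def by blast+
      then have "vadd d v \<in> {c \<in> coset V x. wt (vadd c v) = k}"
        using vadd_in_coset[OF assms(1) _ assms(2)] by simp
      then show "d \<in> (\<lambda>c. vadd c v) ` {c \<in> coset V x. wt (vadd c v) = k}"
        by (rule rev_image_eqI) simp
    qed
  qed
  have "inj_on (\<lambda>c. vadd c v) {c \<in> coset V x. wt (vadd c v) = k}"
    by (rule inj_on_inverseI[where g = "\<lambda>c. vadd c v"]) simp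
  from card_image[OF this] show ?thesis
    unfolding image by simp
qed

lemma card_weight_class_coset_le:
  assumes "is_subspace m V" "x \<in> gf2_space m" "finite S" "\<And>j. j \<in> S \<Longrightarrow> char_vec {j} \<in> V"
  shows "card (weight_class k (coset V x)) * 2 ^ card S \<le> card V * (card S choose (card S div 2))"
proof -
  define C where "C = coset V x"
  define P where "P T c \<longleftrightarrow> wt (vadd c (char_vec T)) = k" for T c
  have C_gf2: "C \<subseteq> gf2_space m"
    unfolding C_def using assms(1,2) by (rule coset_subset_gf2_space)
  then have "finite C"
    using finite_gf2_space finite_subset by blast
  have "card {c \<in> C. P T c} = card (weight_class k C)" if "T \<in> Pow S" for T
  proof -
    have "T \<subseteq> S"
      using that by simp
    then have "finite T"
      using assms(3) by (rule finite_subset)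
    then have "char_vec T \<in> V"
      by (rule char_vec_in_subspace[OF assms(1)]) (use \<open>T \<subseteq> S\<close> assms(4) in blast)
    then show ?thesis
      unfolding C_def P_def by (rule card_weight_class_coset_translate[OF assms(1)])
  qed
  then have "card (weight_class k C) * 2 ^ card S = (\<Sum>T\<in>Pow S. card {c \<in> C. P T c})"
    using card_Pow[OF assms(3)] by simp
  also have "\<dots> = (\<Sum>c\<in>C. card {T \<in> Pow S. P T c})"
    unfolding card_eq_sum using \<open>finite C\<close> assms(3) by (intro sum.swap_restrict) simp_all
  also have "\<dots> \<le> (\<Sum>c\<in>C. card S choose (card S div 2))"
  proof (rule sum_mono)
    fix c assume "c \<in> C"
    then have "finite {i. c i \<noteq> 0}"
      using C_gf2 finite_support_gf2_space by blast
    then show "card {T \<in> Pow S. P T c} \<le> card S choose (card S div 2)"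
      unfolding P_def using assms(3) by (rule card_cube_points_of_weight_le)
  qed
  also have "\<dots> = card V * (card S choose (card S div 2))"
    unfolding C_def by (simp add: card_coset)
  finally show ?thesis
    unfolding C_def .
qed

lemma Suc_times_central_binomial_Suc:
  "Suc n * ((2 * Suc n) choose Suc n) = 2 * (2 * n + 1) * ((2 * n) choose n)"
proof -
  have "Suc n * ((2 * Suc n) choose Suc n) = 2 * (Suc n * (Suc (2 * n) choose n))"
    using Suc_times_binomial[of n "Suc (2 * n)"] by simp
  also have "Suc (2 * n) choose n = Suc (2 * n) choose Suc n"
    using binomial_symmetric[of n "Suc (2 * n)"] by (simp add: Suc_diff_le)
  also have "Suc n * \<dots> = (2 * n + 1) * ((2 * n) choose n)"
    using Suc_times_binomial[of n "2 * n"] by simp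
  finally show ?thesis by simp
qed

lemma central_binomial_sq_le: "((2 * n) choose n)\<^sup>2 * (2 * n + 1) \<le> 16 ^ n"
proof (induction n)
  case 0
  then show ?case by simp
next
  case (Suc n)
  define b where "b = (2 * n) choose n"
  define b' where "b' = (2 * Suc n) choose Suc n"
  have "(Suc n)\<^sup>2 * (b'\<^sup>2 * (2 * Suc n + 1)) = (Suc n * b')\<^sup>2 * (2 * n + 3)"
    by (simp only: power_mult_distrib mult.assoc) (simp add: algebra_simps)
  also have "Suc n * b' = 2 * (2 * n + 1) * b"
    unfolding b_def b'_def by (rule Suc_times_central_binomial_Suc)
  also have "(2 * (2 * n + 1) * b)\<^sup>2 * (2 * n + 3) = 4 * ((2 * n + 1) * (2 * n + 3)) * (b\<^sup>2 * (2 * n + 1))"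
    by (simp add: power2_eq_square algebra_simps)
  also have "\<dots> \<le> 4 * ((2 * n + 1) * (2 * n + 3)) * 16 ^ n"
    using Suc.IH unfolding b_def by simp
  also have "\<dots> \<le> (Suc n)\<^sup>2 * 16 ^ Suc n"
    by (simp add: power2_eq_square algebra_simps)
  finally show ?case
    unfolding b'_def by simp
qed

lemma central_binomial_div_power_tendsto_0: "(\<lambda>n. real ((2 * n) choose n) / 4 ^ n) \<longlonglongrightarrow> 0"
proof -
  have "(real ((2 * n) choose n) / 4 ^ n)\<^sup>2 \<le> inverse (real (Suc n))" for n
  proof -
    have "((2 * n) choose n)\<^sup>2 * Suc n \<le> 16 ^ n"
      using central_binomial_sq_le[of n] by (rule order_trans[rotated]) simp
    then have "real (((2 * n) choose n)\<^sup>2) * real (Suc n) \<le> 16 ^ n"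
      by (metis of_nat_le_iff of_nat_mult of_nat_numeral of_nat_power)
    moreover have "(4 ^ n)\<^sup>2 = (16 :: real) ^ n"
      by (simp add: power2_eq_square flip: power_mult_distrib)
    ultimately show ?thesis
      by (simp add: power_divide field_simps)
  qed
  then have "(\<lambda>n. (real ((2 * n) choose n) / 4 ^ n)\<^sup>2) \<longlonglongrightarrow> 0"
    by (intro tendsto_sandwich[OF _ _ tendsto_const LIMSEQ_inverse_real_of_nat]) simp_all
  from tendsto_real_sqrt[OF this] show ?thesis
    by simp
qed

lemma alpha_le:
  assumes "\<And>i x. x \<in> gf2_space m \<Longrightarrow> real (card (weight_class i (coset V x))) / real (card V) \<le> b"
  shows "alpha m V \<le> b"
  unfolding alpha_def
proof (rule cSup_least)
  have "(\<lambda>_. 0) \<in> gf2_space m"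
    by (simp add: gf2_space_def)
  then show "{real (card (weight_class i (coset V x))) / real (card V) | i x. x \<in> gf2_space m} \<noteq> {}"
    by blast
qed (use assms in blast)

lemma alpha_nonneg:
  assumes "finite V"
  shows "0 \<le> alpha m V"
proof -
  define X where "X = {real (card (weight_class i (coset V x))) / real (card V) | i x. x \<in> gf2_space m}"
  have "card (weight_class i (coset V x)) \<le> card V" for i x
  proof -
    have "card (weight_class i (coset V x)) \<le> card (coset V x)"
    proof (rule card_mono)
      show "finite (coset V x)"
        unfolding coset_def using assms by (rule finite_imageI)
    qed (simp add: weight_class_def)
    then show ?thesis
      by (simp add: card_coset)
  qed
  then have "bdd_above X"
    unfolding X_def bdd_above_def by (auto intro!: exI[of _ 1] simp: divide_le_eq_1)
  define y where "y = real (card (weight_class 0 (coset V (\<lambda>_. 0)))) / real (card V)"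
  have "y \<in> X"
    unfolding X_def y_def gf2_space_def by blast
  with \<open>bdd_above X\<close> have "y \<le> Sup X"
    by (intro cSup_upper)
  moreover have "0 \<le> y"
    by (simp add: y_def)
  ultimately show ?thesis
    unfolding alpha_def X_def[symmetric] by linarith
qed

lemma alpha_le_central_binomial:
  assumes "is_subspace m V" "2 * j \<le> card (weight_class 1 V)"
  shows "alpha m V \<le> real ((2 * j) choose j) / 4 ^ j"
proof (rule alpha_le)
  fix i x assume "x \<in> gf2_space m"
  obtain S where S: "S \<subseteq> {l. char_vec {l} \<in> V}" "card S = 2 * j" "finite S"
    using assms(2) unfolding card_weight_class_1 by (rule obtain_subset_with_card_n)
  have "card (weight_class i (coset V x)) * 4 ^ j \<le> card V * ((2 * j) choose j)"
    using card_weight_class_coset_le[OF assms(1) \<open>x \<in> gf2_space m\<close> S(3), of i] S(1,2)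
    by (auto simp: power_mult)
  then have "real (card (weight_class i (coset V x))) * 4 ^ j \<le> real (card V) * real ((2 * j) choose j)"
    by (metis of_nat_le_iff of_nat_mult of_nat_numeral of_nat_power)
  moreover have "card V > 0"
    using assms(1) finite_subspace card_gt_0_iff unfolding is_subspace_def by blast
  ultimately show "real (card (weight_class i (coset V x))) / real (card V) \<le> real ((2 * j) choose j) / 4 ^ j"
    by (simp add: field_simps)
qed

theorem corollary2:
  fixes m :: "nat \<Rightarrow> nat" and V :: "nat \<Rightarrow> (nat \<Rightarrow> bit) set"
  assumes "\<And>n. m n > 0"
    and "\<And>n. is_subspace (m n) (V n)"
    and "filterlim (\<lambda>n. card (weight_class 1 (V n))) at_top sequentially"
  shows "(\<lambda>n. alpha (m n) (V n)) \<longlonglongrightarrow> 0"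
proof (rule tendsto_sandwich[OF _ _ tendsto_const])
  define j where "j n = card (weight_class 1 (V n)) div 2" for n
  have "filterlim j at_top sequentially"
    unfolding j_def by (rule filterlim_compose[OF filterlim_at_top_div_const_nat assms(3)]) simp
  with central_binomial_div_power_tendsto_0
  show "(\<lambda>n. real ((2 * j n) choose j n) / 4 ^ j n) \<longlonglongrightarrow> 0"
    by (rule filterlim_compose)
  have "alpha (m n) (V n) \<le> real ((2 * j n) choose j n) / 4 ^ j n" for n
    using assms(2) by (rule alpha_le_central_binomial) (simp add: j_def)
  then show "\<forall>\<^sub>F n in sequentially. alpha (m n) (V n) \<le> real ((2 * j n) choose j n) / 4 ^ j n"
    by simp
  show "\<forall>\<^sub>F n in sequentially. 0 \<le> alpha (m n) (V n)"
    using alpha_nonneg[OF finite_subspace[OF assms(2)]] by simp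
qed

end
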